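(* Let $E$ be an integral regular elliptic curve over $\mathbb{F}_q$, let $\mathbf{n}_{m-1}$ be a tuple of positive integers, $Q=q_{\mathbf{n}_{m-1}}$, and let $a$ and $\beta^*_n$ ($n\ge0$) be as in the context (assuming $\alpha_0\neq0$), with additionally $\beta^*_{-1}:=0$. Then for every $n\ge1$, $$(Q^n-1)\,\beta^*_n=(Q^n+Q^{n-1}-a)\,\beta^*_{n-1}-(Q^{n-1}-Q)\,\beta^*_{n-2},$$ and together with $\beta^*_0=1$, $\beta^*_{-1}=0$ this recursion determines all $\beta^*_n$.
   Context: Let $\zeta_E(s)=\sum_{D\ge 0}N(D)^{-s}$ be the Artin zeta function of $E$ and $\widehat\zeta_E(s)=\zeta_E(s)$ its complete Artin zeta function (genus $1$). Derived zeta functions are defined recursively (here $g=1$). For the empty tuple $\mathbf{n}_{-1}=()$ put $q_{\mathbf{n}_{-1}}=q$, $T_{\mathbf{n}_{-1}}=q^{-s}$, $\widehat\zeta^{(\mathbf{n}_{-1})}_E=\widehat\zeta_E$. For a tuple $\mathbf{n}_m=(n_0,\dots,n_m)$ of positive integers put $\mathbf{n}_{m-1}=(n_0,\dots,n_{m-1})$, $q_{\mathbf{n}_m}=q^{n_0\cdots n_m}$, $T_{\mathbf{n}_m}=q^{-n_0\cdots n_ms}$; with $\widehat Z^{(\mathbf{n}_{m-1})}_E(T_{\mathbf{n}_{m-1}}):=\widehat\zeta^{(\mathbf{n}_{m-1})}_E(s)$, $\widehat\zeta^{(\mathbf{n}_{m-1})}_E(1):=\operatorname{Res}_{T_{\mathbf{n}_{m-1}}=1}\widehat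 Z^{(\mathbf{n}_{m-1})}_E$, $\widehat v_N=\prod_{k=1}^N\widehat\zeta^{(\mathbf{n}_{m-1})}_E(k)$, $$\widehat\zeta^{(\mathbf{n}_m)}_E(s)=\sum_{a=1}^{n_m}\Biggl(\sum_{\substack{k_1,\dots,k_p>0\\ \sum k_i=n_m-a}}\frac{\widehat v_{k_1}\cdots\widehat v_{k_p}}{\prod_{j=1}^{p-1}(1-q_{\mathbf{n}_{m-1}}^{k_j+k_{j+1}})}\frac{1}{1-q_{\mathbf{n}_{m-1}}^{n_ms-n_m+a+k_p}}\Biggr)\widehat\zeta^{(\mathbf{n}_{m-1})}_E(n_ms-n_m+a)\Biggl(\sum_{\substack{l_1,\dots,l_r>0\\ \sum l_i=a-1}}\frac{1}{1-q_{\mathbf{n}_{m-1}}^{-n_ms+n_m-a+1+l_1}}\frac{\widehat v_{l_1}\cdots\widehat v_{l_r}}{\prod_{j=1}^{r-1}(1-q_{\mathbf{n}_{m-1}}^{l_j+l_{j+1}})}\Biggr),$$ inner sums over ordered tuples of positive integers, an empty-composition sum being $1$. For the tuple $\mathbf{n}_{m-1}$, with $Q=q_{\mathbf{n}_{m-1}}$ and $T=Q^{-s}$, one can write $\widehat\zeta^{(\mathbf{n}_{m-1})}_E(s)=\alpha_0\cdot\frac{1-aT+QT^2}{(1-T)(1-QT)}$ with numbers $\alpha_0=\alpha^{(\mathbf{n}_{m-1})}_E(0)$ and $a$. Normalization: $\zeta^*(s):=\frac{1-aT+QT^2}{(1-T)(1-QT)}$, $\zeta^*(1):=\operatorname{Res}_{T=1}\zeta^*=\frac{Q+1-a}{Q-1}$,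 $v^*_k:=\prod_{j=1}^k\zeta^*(j)$, $\beta^*_0:=1$ and for $n\ge1$ $$\beta^*_n:=\sum_{\substack{k_1,\dots,k_p>0\\k_1+\cdots+k_p=n}}\frac{v^*_{k_1}\cdots v^*_{k_p}}{\prod_{j=1}^{p-1}(1-Q^{k_j+k_{j+1}})},$$ the $(\mathbf{n}_{m-1},n)$-derived beta invariant of $E$ computed from the normalized function $\zeta^*$. *)

theory Defs
  imports "HOL-Analysis.Analysis" "HOL-Computational_Algebra.Primes"
begin

text \<open>Normalized zeta function zeta*(s) = (1 - a T + Q T^2)/((1-T)(1-QT)), T = Q^(-s),
  evaluated at positive integers s = j; at j = 1 it is the residue (Q+1-a)/(Q-1).\<close>
definition zeta_star :: "real \<Rightarrow> real \<Rightarrow> nat \<Rightarrow> real" where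
  "zeta_star Q a j =
     (if j = 1 then (Q + 1 - a) / (Q - 1)
      else (let T = 1 / Q ^ j in (1 - a * T + Q * T\<^sup>2) / ((1 - T) * (1 - Q * T))))"

definition v_star :: "real \<Rightarrow> real \<Rightarrow> nat \<Rightarrow> real" where
  "v_star Q a k = (\<Prod>j=1..k. zeta_star Q a j)"

definition compositions :: "nat \<Rightarrow> nat list set" where
  "compositions n = {ks. (\<forall>k\<in>set ks. 0 < k) \<and> sum_list ks = n}"

text \<open>beta*_n for integer n: 0 for n < 0 (so beta*_{-1} = 0); for n = 0 the sum over the
  single empty composition gives beta*_0 = 1.\<close>
definition beta_star :: "real \<Rightarrow> real \<Rightarrow> int \<Rightarrow> real" where
  "beta_star Q a n =
     (if n < 0 then 0
      else \<Sum>ks\<in>compositions (nat n).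
             (\<Prod>k\<leftarrow>ks. v_star Q a k) /
             (\<Prod>j<length ks - 1. (1 - Q ^ (ks ! j + ks ! (j + 1)))))"

definition prime_power :: "nat \<Rightarrow> bool" where
  "prime_power q \<longleftrightarrow> (\<exists>p k. prime p \<and> 0 < k \<and> q = p ^ k)"

end

theory Submission
  imports Defs
begin

(* The recurrence comes from a generating function.  For x away from the poles Q^(-l), l >= 1, let
   F_n(x) be the sum defining beta*_n with each summand divided by 1 - x Q^(k_1), k_1 the first part
   of the composition; so F_n(0) = beta*_n and F_n(x) = sum_l v*_l F_(n-l)(Q^l) / (1 - x Q^l).
   Three identities are proved by a simultaneous induction on n:
   (D) the q-difference equation (1 - xQ) F_m(x) = (1 - x Q^(m+1)) F_m(Qx) + Qx (Q^(m-1) - 1) F_(m-1)(Qx);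
   (E) its residue at x = Q^(-l), a linear relation between the coefficients v*_l F_(m-l)(Q^l);
   (G) a functional equation expressing F_(n+1)(x) through F_n(x), F_n(Qx) and F_n(1).
   By partial fractions (E) at m gives (D) at m, (G) at m - l gives (E) at (m, l), and (D) below n + 1
   gives (G) at n; the only inputs about zeta* are zeta*(1) and its closed form at the integers k >= 2.
   At x = 0, (G) together with the sum over l of (E) is the three-term recurrence, and since
   Q^n - 1 <> 0 the recurrence determines the sequence from its two initial values. *)

section \<open>Compositions and the generating function\<close>

lemma compositions_0: "compositions 0 = {[]}"
proof -
  have "ks = []" if "\<forall>k\<in>set ks. 0 < k" "\<forall>k\<in>set ks. k = 0" for ks :: "nat list"
    using that by (cases ks) auto
  then show ?thesis
    unfolding compositions_def by (auto simp: sum_list_eq_0_iff)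
qed

lemma compositions_nonzero:
  assumes "n \<noteq> 0"
  shows "compositions n = (\<lambda>(l, ks). l # ks) ` (SIGMA l:{1..n}. compositions (n - l))"
proof
  show "compositions n \<subseteq> (\<lambda>(l, ks). l # ks) ` (SIGMA l:{1..n}. compositions (n - l))"
  proof
    fix ks assume ks: "ks \<in> compositions n"
    with assms obtain l ks' where "ks = l # ks'"
      unfolding compositions_def by (cases ks) auto
    with ks show "ks \<in> (\<lambda>(l, ks). l # ks) ` (SIGMA l:{1..n}. compositions (n - l))"
      unfolding compositions_def by force
  qed
qed (auto simp: compositions_def)

lemma finite_compositions: "finite (compositions n)"
proof (induction n rule: less_induct)
  case (less n)
  then show ?case
    by (cases "n = 0") (auto simp: compositions_0 compositions_nonzero intro!: finite_imageI)
qed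

function beta_fun :: "real \<Rightarrow> real \<Rightarrow> nat \<Rightarrow> real \<Rightarrow> real" where
  "beta_fun Q a n x =
     (if n = 0 then 1
      else (\<Sum>l=1..n. v_star Q a l * beta_fun Q a (n - l) (Q ^ l) / (1 - x * Q ^ l)))"
  by auto
termination by (relation "Wellfounded.measure (\<lambda>(Q, a, n, x). n)") auto

declare beta_fun.simps [simp del]

lemma beta_fun_0 [simp]: "beta_fun Q a 0 x = 1"
  by (simp add: beta_fun.simps)

lemma beta_fun_nonzero:
  "n \<noteq> 0 \<Longrightarrow> beta_fun Q a n x = (\<Sum>l=1..n. v_star Q a l * beta_fun Q a (n - l) (Q ^ l) / (1 - x * Q ^ l))"
  by (simp add: beta_fun.simps)

fun composition_weight :: "real \<Rightarrow> real \<Rightarrow> nat list \<Rightarrow> real \<Rightarrow> real" where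
  "composition_weight Q a [] x = 1"
| "composition_weight Q a (k # ks) x = v_star Q a k / (1 - x * Q ^ k) * composition_weight Q a ks (Q ^ k)"

definition adjacent_prod :: "real \<Rightarrow> nat list \<Rightarrow> real" where
  "adjacent_prod Q ks = (\<Prod>j<length ks - 1. (1 - Q ^ (ks ! j + ks ! (j + 1))))"

lemma adjacent_prod_Cons_Cons:
  "adjacent_prod Q (k # k' # ks) = (1 - Q ^ (k + k')) * adjacent_prod Q (k' # ks)"
  unfolding adjacent_prod_def by (simp add: prod.lessThan_Suc_shift del: prod.lessThan_Suc)

lemma composition_weight_eq:
  "composition_weight Q a ks x =
     (\<Prod>k\<leftarrow>ks. v_star Q a k) / adjacent_prod Q ks / (if ks = [] then 1 else 1 - x * Q ^ hd ks)"
proof (induction ks arbitrary: x)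
  case (Cons k ks)
  show ?case
  proof (cases ks)
    case (Cons k' ks')
    show ?thesis
      using Cons.IH[of "Q ^ k"] unfolding Cons by (simp add: adjacent_prod_Cons_Cons power_add field_simps)
  qed (simp add: adjacent_prod_def)
qed (simp add: adjacent_prod_def)

lemma sum_composition_weight:
  "(\<Sum>ks\<in>compositions n. composition_weight Q a ks x) = beta_fun Q a n x"
proof (induction n arbitrary: x rule: less_induct)
  case (less n)
  show ?case
  proof (cases "n = 0")
    case False
    have "inj_on (\<lambda>(l, ks). l # ks) (SIGMA l:{1..n}. compositions (n - l))"
      by (auto simp: inj_on_def)
    then have "(\<Sum>ks\<in>compositions n. composition_weight Q a ks x)
        = (\<Sum>(l, ks)\<in>(SIGMA l:{1..n}. compositions (n - l)). composition_weight Q a (l # ks) x)"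
      by (simp add: compositions_nonzero[OF False] sum.reindex case_prod_beta')
    also have "\<dots> = (\<Sum>l=1..n. \<Sum>ks\<in>compositions (n - l). composition_weight Q a (l # ks) x)"
      by (rule sum.Sigma[symmetric]) (auto simp: finite_compositions)
    also have "\<dots> = (\<Sum>l=1..n. v_star Q a l / (1 - x * Q ^ l)
                            * (\<Sum>ks\<in>compositions (n - l). composition_weight Q a ks (Q ^ l)))"
      by (simp add: sum_distrib_left)
    also have "\<dots> = (\<Sum>l=1..n. v_star Q a l / (1 - x * Q ^ l) * beta_fun Q a (n - l) (Q ^ l))"
      using less False by (intro sum.cong) auto
    also have "\<dots> = beta_fun Q a n x"
      using False by (simp add: beta_fun_nonzero)
    finally show ?thesis .
  qed (simp add: compositions_0)
qed

lemma beta_star_eq_beta_fun: "beta_star Q a (int n) = beta_fun Q a n 0"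
proof -
  have "composition_weight Q a ks 0 = (\<Prod>k\<leftarrow>ks. v_star Q a k) / adjacent_prod Q ks" for ks
    by (simp add: composition_weight_eq)
  then show ?thesis
    by (simp add: beta_star_def adjacent_prod_def flip: sum_composition_weight)
qed

lemma beta_star_0 [simp]: "beta_star Q a 0 = 1"
  using beta_star_eq_beta_fun[of Q a 0] by simp

lemma beta_star_neg [simp]: "n < 0 \<Longrightarrow> beta_star Q a n = 0"
  by (simp add: beta_star_def)

lemma v_star_1: "v_star Q a 1 = (Q + 1 - a) / (Q - 1)"
  by (simp add: v_star_def zeta_star_def)

lemma v_star_Suc: "v_star Q a (Suc l) = v_star Q a l * zeta_star Q a (Suc l)"
  by (simp add: v_star_def prod.cl_ivl_Suc)

section \<open>Partial fractions\<close>

definition beta_coeff :: "real \<Rightarrow> real \<Rightarrow> nat \<Rightarrow> nat \<Rightarrow> real" where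
  "beta_coeff Q a n l = (if 1 \<le> l \<and> l \<le> n then v_star Q a l * beta_fun Q a (n - l) (Q ^ l) else 0)"

lemma beta_coeff_0 [simp]: "beta_coeff Q a n 0 = 0"
  by (simp add: beta_coeff_def)

lemma beta_coeff_eq_0: "n < l \<Longrightarrow> beta_coeff Q a n l = 0"
  by (simp add: beta_coeff_def)

lemma sum_atLeast1_atMost_Suc_shift: "(\<Sum>l=1..Suc n. h l) = h 1 + (\<Sum>j=1..n. h (Suc j))"
  by (simp add: sum.atLeast_Suc_atMost sum.shift_bounds_cl_Suc_ivl del: sum.cl_ivl_Suc)

lemma beta_fun_eq_sum_coeff:
  assumes "1 \<le> n" "n \<le> K"
  shows "beta_fun Q a n x = (\<Sum>l=1..K. beta_coeff Q a n l / (1 - x * Q ^ l))"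
proof -
  have "beta_fun Q a n x = (\<Sum>l=1..n. beta_coeff Q a n l / (1 - x * Q ^ l))"
    using assms by (simp add: beta_fun_nonzero beta_coeff_def)
  also have "\<dots> = (\<Sum>l=1..K. beta_coeff Q a n l / (1 - x * Q ^ l))"
    using assms by (intro sum.mono_neutral_left) (auto simp: beta_coeff_eq_0)
  finally show ?thesis .
qed

lemma beta_fun_mult_eq_sum_coeff:
  assumes "1 \<le> n"
  shows "beta_fun Q a n (Q * x) = (\<Sum>l=1..n. beta_coeff Q a n l / (1 - x * Q ^ Suc l))"
  using assms by (simp add: beta_fun_nonzero beta_coeff_def mult.assoc mult.left_commute)

lemma beta_fun_mult_eq_sum_coeff_shift:
  assumes "1 \<le> n" "n + 1 \<le> K"
  shows "beta_fun Q a n (Q * x) = (\<Sum>l=1..K. beta_coeff Q a n (l - 1) / (1 - x * Q ^ l))"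
proof -
  have "beta_fun Q a n (Q * x) = (\<Sum>l=Suc 1..Suc n. beta_coeff Q a n (l - 1) / (1 - x * Q ^ l))"
    unfolding beta_fun_mult_eq_sum_coeff[OF assms(1)] by (subst sum.shift_bounds_cl_Suc_ivl) simp
  also have "\<dots> = (\<Sum>l=1..K. beta_coeff Q a n (l - 1) / (1 - x * Q ^ l))"
    using assms by (intro sum.mono_neutral_left) (auto simp: beta_coeff_eq_0)
  finally show ?thesis .
qed

(* The identities (D), (E), (G) say that shift_defect, coeff_defect and recursion_defect vanish. *)
definition shift_defect :: "real \<Rightarrow> real \<Rightarrow> nat \<Rightarrow> real \<Rightarrow> real" where
  "shift_defect Q a m x =
     (1 - x * Q) * beta_fun Q a m x - (1 - x * Q ^ (m + 1)) * beta_fun Q a m (Q * x)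
       - Q * x * (Q ^ (m - 1) - 1) * beta_fun Q a (m - 1) (Q * x)"

definition coeff_defect :: "real \<Rightarrow> real \<Rightarrow> nat \<Rightarrow> nat \<Rightarrow> real" where
  "coeff_defect Q a m l =
     beta_coeff Q a m l * (Q ^ l - Q) - beta_coeff Q a m (l - 1) * (Q ^ l - Q ^ (m + 1))
       - beta_coeff Q a (m - 1) (l - 1) * Q * (Q ^ (m - 1) - 1)"

lemma coeff_defect_eq_0_outside:
  assumes "l < 2 \<or> m < l"
  shows "coeff_defect Q a m l = 0"
proof -
  consider "l = 0" | "l = 1" | "l = Suc m" | "Suc m < l"
    using assms by linarith
  then show ?thesis
  proof cases
    case 3
    then show ?thesis
      by (cases m) (simp_all add: coeff_defect_def beta_coeff_eq_0)
  qed (simp_all add: coeff_defect_def beta_coeff_eq_0)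
qed

lemma shift_defect_partial_fractions:
  assumes "1 \<le> m"
  shows "shift_defect Q a m x =
           (\<Sum>l=1..Suc m. ((1 - x * Q) * beta_coeff Q a m l - (1 - x * Q ^ (m + 1)) * beta_coeff Q a m (l - 1)
              - Q * x * (Q ^ (m - 1) - 1) * beta_coeff Q a (m - 1) (l - 1)) / (1 - x * Q ^ l))"
proof -
  let ?c = "beta_coeff Q a" and ?d = "\<lambda>l. 1 - x * Q ^ l"
  have this_fun: "beta_fun Q a m x = (\<Sum>l=1..Suc m. ?c m l / ?d l)"
    using assms by (intro beta_fun_eq_sum_coeff) auto
  have shifted: "beta_fun Q a m (Q * x) = (\<Sum>l=1..Suc m. ?c m (l - 1) / ?d l)"
    using assms by (intro beta_fun_mult_eq_sum_coeff_shift) auto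
  have shifted_prev: "Q * x * (Q ^ (m - 1) - 1) * beta_fun Q a (m - 1) (Q * x)
      = (\<Sum>l=1..Suc m. Q * x * (Q ^ (m - 1) - 1) * (?c (m - 1) (l - 1) / ?d l))"
  proof (cases "m = 1")
    case False
    then have "beta_fun Q a (m - 1) (Q * x) = (\<Sum>l=1..Suc m. ?c (m - 1) (l - 1) / ?d l)"
      using assms by (intro beta_fun_mult_eq_sum_coeff_shift) auto
    then show ?thesis
      by (simp only: sum_distrib_left)
  qed simp
  show ?thesis
    unfolding shift_defect_def this_fun shifted shifted_prev
    by (simp only: sum_distrib_left sum_subtractf diff_divide_distrib times_divide_eq_right)
qed

(* (F_n(x) - F_n(Qx)) / x, in a form that stays meaningful at x = 0. *)
definition beta_fun_qdiff :: "real \<Rightarrow> real \<Rightarrow> nat \<Rightarrow> real \<Rightarrow> real" where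
  "beta_fun_qdiff Q a n x =
     (\<Sum>l=1..n. beta_coeff Q a n l * (Q ^ l / (1 - x * Q ^ l) - Q ^ (l + 1) / (1 - x * Q ^ (l + 1))))"

definition recursion_defect :: "real \<Rightarrow> real \<Rightarrow> nat \<Rightarrow> real \<Rightarrow> real" where
  "recursion_defect Q a n x =
     beta_fun Q a n (Q * x) - (Q + 1 - a) / (1 - x * Q) * beta_fun Q a n (Q * x)
       - (1 - Q ^ (n + 1)) * beta_fun Q a (n + 1) x - Q ^ n * beta_fun Q a n x
       + beta_fun_qdiff Q a n x"

lemma beta_fun_qdiff_eq_sum:
  "beta_fun_qdiff Q a n x =
     (\<Sum>l=1..Suc n. (beta_coeff Q a n l - beta_coeff Q a n (l - 1)) * Q ^ l / (1 - x * Q ^ l))"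
proof -
  let ?c = "beta_coeff Q a n" and ?d = "\<lambda>l. 1 - x * Q ^ l"
  have "beta_fun_qdiff Q a n x = (\<Sum>l=1..n. ?c l * Q ^ l / ?d l) - (\<Sum>l=1..n. ?c l * Q ^ Suc l / ?d (Suc l))"
    by (simp add: beta_fun_qdiff_def sum_subtractf right_diff_distrib)
  also have "(\<Sum>l=1..n. ?c l * Q ^ l / ?d l) = (\<Sum>l=1..Suc n. ?c l * Q ^ l / ?d l)"
    by (simp add: beta_coeff_eq_0)
  also have "(\<Sum>l=1..n. ?c l * Q ^ Suc l / ?d (Suc l)) = (\<Sum>l=1..Suc n. ?c (l - 1) * Q ^ l / ?d l)"
    unfolding sum_atLeast1_atMost_Suc_shift by simp
  finally show ?thesis
    by (simp add: sum_subtractf left_diff_distrib diff_divide_distrib)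
qed

(* At l = 1 the factor 1 / (1 - Q^0) is the junk value 1 / 0 = 0, harmless since beta_coeff Q a n 0 = 0. *)
definition recursion_summand :: "real \<Rightarrow> real \<Rightarrow> nat \<Rightarrow> nat \<Rightarrow> real" where
  "recursion_summand Q a n l =
     beta_coeff Q a n (l - 1) * (1 + (Q + 1 - a) * Q ^ (l - 1) / (1 - Q ^ (l - 1)) - Q ^ l)
       - (1 - Q ^ (n + 1)) * beta_coeff Q a (n + 1) l + (Q ^ l - Q ^ n) * beta_coeff Q a n l"

context
  fixes Q a :: real
  assumes Q_gt_1: "1 < Q"
begin

lemma one_minus_mult_power_nonzero:
  assumes "x = 0 \<or> 1 \<le> x" "1 \<le> l"
  shows "1 - x * Q ^ l \<noteq> 0"
proof -
  have "1 < Q ^ l"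
    using assms(2) Q_gt_1 by (simp add: one_less_power)
  moreover have "Q ^ l \<le> x * Q ^ l" if "1 \<le> x"
    using that mult_right_mono[of 1 x "Q ^ l"] Q_gt_1 by simp
  ultimately show ?thesis
    using assms(1) by fastforce
qed

lemma zeta_star_Suc:
  assumes "1 \<le> k"
  shows "zeta_star Q a (Suc k) = ((Q ^ Suc k)\<^sup>2 - a * Q ^ Suc k + Q) / ((Q ^ Suc k - 1) * (Q ^ Suc k - Q))"
proof -
  define y where "y = Q ^ Suc k"
  have "Q < y"
    using assms Q_gt_1 one_less_power[of Q k] by (simp add: y_def)
  then have "y \<noteq> 0" "y - 1 \<noteq> 0" "y - Q \<noteq> 0"
    using Q_gt_1 by auto
  have "zeta_star Q a (Suc k) = (1 - a * (1 / y) + Q * (1 / y)\<^sup>2) / ((1 - 1 / y) * (1 - Q * (1 / y)))"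
    using assms by (simp add: zeta_star_def Let_def y_def)
  also have "\<dots> = ((y\<^sup>2 - a * y + Q) / y\<^sup>2) / (((y - 1) * (y - Q)) / y\<^sup>2)"
    using \<open>y \<noteq> 0\<close> by (simp add: field_simps power2_eq_square)
  also have "\<dots> = (y\<^sup>2 - a * y + Q) / ((y - 1) * (y - Q))"
    using \<open>y \<noteq> 0\<close> by simp
  finally show ?thesis
    unfolding y_def .
qed

lemma zeta_star_Suc_mult_one_minus:
  assumes "1 \<le> j"
  shows "zeta_star Q a (Suc j) * (1 - Q ^ Suc j) = 1 + (Q + 1 - a) * Q ^ j / (1 - Q ^ j) - Q ^ Suc j"
proof -
  define p where "p = Q ^ j"
  have "1 < p"
    using assms Q_gt_1 by (simp add: p_def one_less_power)
  then have "1 - p \<noteq> 0" "(Q * p - 1) * (Q * p - Q) \<noteq> 0"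
    using Q_gt_1 less_1_mult[of Q p] by auto
  then show ?thesis
    unfolding zeta_star_Suc[OF assms] power_Suc p_def[symmetric]
    by (simp add: field_simps power2_eq_square)
qed

lemma zeta_star_Suc_mult_minus_Q:
  assumes "1 \<le> k"
  shows "zeta_star Q a (Suc k) * (Q ^ Suc k - Q) = Q ^ Suc k - (Q + 1 - a) * Q ^ Suc k / (1 - Q ^ Suc k) - Q"
proof -
  define y where "y = Q ^ Suc k"
  have "Q < y"
    using assms Q_gt_1 one_less_power[of Q k] by (simp add: y_def)
  then have "1 - y \<noteq> 0" "(y - 1) * (y - Q) \<noteq> 0"
    using Q_gt_1 by auto
  then show ?thesis
    unfolding zeta_star_Suc[OF assms] y_def[symmetric]
    by (simp add: field_simps power2_eq_square)
qed

lemma shift_defect_eq_sum_coeff_defect: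
  assumes "1 \<le> m" "1 \<le> x"
  shows "shift_defect Q a m x = x * (\<Sum>l=1..Suc m. coeff_defect Q a m l / (1 - x * Q ^ l))"
proof -
  let ?c = "beta_coeff Q a" and ?d = "\<lambda>l. 1 - x * Q ^ l"
  have telescope: "(\<Sum>l=1..Suc k. f l - f (l - 1)) = f (Suc k) - (f 0 :: real)" for f k
    by (induction k) auto
  have summand: "((1 - x * Q) * ?c m l - (1 - x * Q ^ (m + 1)) * ?c m (l - 1)
        - Q * x * (Q ^ (m - 1) - 1) * ?c (m - 1) (l - 1)) / ?d l
      = ?c m l - ?c m (l - 1) + x * (coeff_defect Q a m l / ?d l)" if "l \<in> {1..Suc m}" for l
  proof -
    have "?d l \<noteq> 0"
      using one_minus_mult_power_nonzero[of x l] that assms(2) by simp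
    have "(1 - x * Q) * ?c m l - (1 - x * Q ^ (m + 1)) * ?c m (l - 1)
          - Q * x * (Q ^ (m - 1) - 1) * ?c (m - 1) (l - 1)
        = (?c m l - ?c m (l - 1)) * ?d l + x * coeff_defect Q a m l"
      by (simp add: coeff_defect_def algebra_simps)
    with \<open>?d l \<noteq> 0\<close> show ?thesis
      by (simp add: add_divide_distrib)
  qed
  have "shift_defect Q a m x = (\<Sum>l=1..Suc m. ?c m l - ?c m (l - 1) + x * (coeff_defect Q a m l / ?d l))"
    unfolding shift_defect_partial_fractions[OF assms(1)] by (rule sum.cong[OF refl summand])
  also have "\<dots> = (\<Sum>l=1..Suc m. ?c m l - ?c m (l - 1)) + x * (\<Sum>l=1..Suc m. coeff_defect Q a m l / ?d l)"
    by (simp only: sum.distrib sum_distrib_left)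
  also have "(\<Sum>l=1..Suc m. ?c m l - ?c m (l - 1)) = 0"
    by (simp only: telescope) (simp add: beta_coeff_eq_0)
  finally show ?thesis
    by simp
qed

lemma mult_beta_fun_qdiff:
  assumes "x = 0 \<or> 1 \<le> x"
  shows "x * beta_fun_qdiff Q a n x = beta_fun Q a n x - beta_fun Q a n (Q * x)"
proof (cases "n = 0")
  case False
  then have "1 \<le> n"
    by simp
  let ?c = "beta_coeff Q a n"
  have "x * beta_fun_qdiff Q a n x = (\<Sum>l=1..n. ?c l / (1 - x * Q ^ l) - ?c l / (1 - x * Q ^ Suc l))"
    unfolding beta_fun_qdiff_def sum_distrib_left
  proof (intro sum.cong refl)
    fix l assume "l \<in> {1..n}"
    then have "1 - x * Q ^ l \<noteq> 0" "1 - x * (Q * Q ^ l) \<noteq> 0"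
      using one_minus_mult_power_nonzero[OF assms, of l] one_minus_mult_power_nonzero[OF assms, of "Suc l"]
      by auto
    then show "x * (?c l * (Q ^ l / (1 - x * Q ^ l) - Q ^ (l + 1) / (1 - x * Q ^ (l + 1))))
        = ?c l / (1 - x * Q ^ l) - ?c l / (1 - x * Q ^ Suc l)"
      by (simp add: field_simps)
  qed
  also have "\<dots> = beta_fun Q a n x - beta_fun Q a n (Q * x)"
    using \<open>1 \<le> n\<close>
    by (simp add: beta_fun_eq_sum_coeff[OF \<open>1 \<le> n\<close> order_refl, where x = x] beta_fun_mult_eq_sum_coeff sum_subtractf)
  finally show ?thesis .
qed (simp add: beta_fun_qdiff_def)

lemma recursion_defect_0:
  assumes "x = 0 \<or> 1 \<le> x"
  shows "recursion_defect Q a 0 x = 0"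
proof -
  have "1 - x * Q \<noteq> 0" "Q - 1 \<noteq> 0" "(Q - 1) * (1 - x * Q) \<noteq> 0"
    using one_minus_mult_power_nonzero[OF assms, of 1] Q_gt_1 by auto
  moreover have "beta_fun Q a 1 x = (Q + 1 - a) / (Q - 1) / (1 - x * Q)"
    by (simp add: beta_fun_nonzero v_star_def zeta_star_def)
  ultimately show ?thesis
    by (simp add: recursion_defect_def beta_fun_qdiff_def field_simps)
qed

lemma mult_recursion_defect:
  assumes "1 \<le> x"
  shows "Q * x * recursion_defect Q a n x
           = (Q * x - (Q + 1 - a) * (Q * x) / (1 - x * Q) - Q) * beta_fun Q a n (Q * x)
             - Q * x * (1 - Q ^ (n + 1)) * beta_fun Q a (n + 1) x - Q * (Q ^ n * x - 1) * beta_fun Q a n x"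
proof -
  have qdiff: "x * beta_fun_qdiff Q a n x = beta_fun Q a n x - beta_fun Q a n (Q * x)"
    using mult_beta_fun_qdiff assms by simp
  have "Q * x * recursion_defect Q a n x
      = Q * x * beta_fun Q a n (Q * x) - (Q + 1 - a) * (Q * x) / (1 - x * Q) * beta_fun Q a n (Q * x)
        - Q * x * (1 - Q ^ (n + 1)) * beta_fun Q a (n + 1) x - Q * x * Q ^ n * beta_fun Q a n x
        + Q * (x * beta_fun_qdiff Q a n x)"
    unfolding recursion_defect_def by (simp add: algebra_simps)
  then show ?thesis
    unfolding qdiff by (simp add: algebra_simps)
qed

lemma coeff_defect_eq_recursion_defect:
  assumes "2 \<le> l" "l \<le> m"
  shows "coeff_defect Q a m l = v_star Q a (l - 1) * Q ^ l * recursion_defect Q a (m - l) (Q ^ (l - 1))"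
proof -
  obtain k where l: "l = Suc k" and "1 \<le> k"
    using assms(1) by (cases l) auto
  define n where "n = m - l"
  define x where "x = Q ^ k"
  have m: "m = n + k + 1"
    using assms l by (simp add: n_def)
  have "1 \<le> x"
    using Q_gt_1 by (simp add: x_def one_le_power)
  have coeffs: "beta_coeff Q a m l = v_star Q a k * zeta_star Q a (Suc k) * beta_fun Q a n (Q * x)"
      "beta_coeff Q a m (l - 1) = v_star Q a k * beta_fun Q a (n + 1) x"
      "beta_coeff Q a (m - 1) (l - 1) = v_star Q a k * beta_fun Q a n x"
    using assms \<open>1 \<le> k\<close> unfolding beta_coeff_def by (simp_all add: v_star_Suc l m x_def)
  have zeta: "zeta_star Q a (Suc k) * (Q * x - Q) = Q * x - (Q + 1 - a) * (Q * x) / (1 - x * Q) - Q"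
    using zeta_star_Suc_mult_minus_Q[OF \<open>1 \<le> k\<close>] by (simp add: x_def mult.commute)
  have powers: "Q ^ l = Q * x" "Q ^ (m + 1) = Q * x * Q ^ (n + 1)" "Q ^ (m - 1) = Q ^ n * x"
    using m l by (simp_all add: x_def power_add)
  have "coeff_defect Q a m l = v_star Q a k * (zeta_star Q a (Suc k) * (Q * x - Q) * beta_fun Q a n (Q * x)
        - Q * x * (1 - Q ^ (n + 1)) * beta_fun Q a (n + 1) x - Q * (Q ^ n * x - 1) * beta_fun Q a n x)"
    unfolding coeff_defect_def coeffs powers by (simp add: algebra_simps)
  also have "\<dots> = v_star Q a k * (Q * x * recursion_defect Q a n x)"
    unfolding zeta mult_recursion_defect[OF \<open>1 \<le> x\<close>] ..
  finally show ?thesis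
    by (simp add: l x_def n_def powers(1))
qed

lemma recursion_summand_1:
  assumes "1 \<le> n"
  shows "recursion_summand Q a n 1 - (Q + 1 - a) * beta_fun Q a n 1 = v_star Q a 1 * shift_defect Q a n 1"
proof -
  have "Q - 1 \<noteq> 0"
    using Q_gt_1 by simp
  then have nu: "Q + 1 - a = v_star Q a 1 * (Q - 1)"
    unfolding v_star_1 by simp
  have coeffs: "beta_coeff Q a (n + 1) 1 = v_star Q a 1 * beta_fun Q a n Q"
      "beta_coeff Q a n 1 = v_star Q a 1 * beta_fun Q a (n - 1) Q"
    using assms by (simp_all add: beta_coeff_def)
  have "Q ^ n = Q * Q ^ (n - 1)"
    using assms by (simp add: power_eq_if)
  then show ?thesis
    unfolding recursion_summand_def shift_defect_def nu coeffs by (simp add: algebra_simps)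
qed

lemma recursion_summand_Suc:
  assumes "1 \<le> j" "j \<le> n"
  shows "recursion_summand Q a n (Suc j) = v_star Q a (Suc j) * shift_defect Q a (n - j) (Q ^ j)"
proof -
  define m where "m = n - j"
  have coeffs: "beta_coeff Q a n j = v_star Q a j * beta_fun Q a m (Q ^ j)"
      "beta_coeff Q a (n + 1) (Suc j) = v_star Q a (Suc j) * beta_fun Q a m (Q * Q ^ j)"
      "beta_coeff Q a n (Suc j) = (if m = 0 then 0 else v_star Q a (Suc j) * beta_fun Q a (m - 1) (Q * Q ^ j))"
    using assms by (auto simp: beta_coeff_def m_def Suc_diff_Suc)
  have "recursion_summand Q a n (Suc j)
      = zeta_star Q a (Suc j) * (1 - Q ^ Suc j) * beta_coeff Q a n j
        - (1 - Q ^ (n + 1)) * beta_coeff Q a (n + 1) (Suc j) + (Q ^ Suc j - Q ^ n) * beta_coeff Q a n (Suc j)"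
    using zeta_star_Suc_mult_one_minus[OF assms(1)] by (simp add: recursion_summand_def)
  also have "\<dots> = v_star Q a (Suc j) * shift_defect Q a m (Q ^ j)"
  proof (cases "m = 0")
    case True
    then show ?thesis
      using assms by (simp add: beta_coeff_def shift_defect_def v_star_Suc m_def algebra_simps)
  next
    case False
    then obtain k where "m = Suc k"
      using not0_implies_Suc by blast
    then have "n = j + Suc k"
      using assms by (simp add: m_def)
    then show ?thesis
      unfolding coeffs shift_defect_def v_star_Suc using \<open>m = Suc k\<close>
      by (simp add: power_add algebra_simps)
  qed
  finally show ?thesis
    by (simp add: m_def)
qed

lemma beta_fun_mult_div_partial_fractions:
  assumes "1 \<le> n" "x = 0 \<or> 1 \<le> x"
  shows "beta_fun Q a n (Q * x) / (1 - x * Q) = beta_fun Q a n 1 / (1 - x * Q)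
           - (\<Sum>l=1..Suc n. beta_coeff Q a n (l - 1) * Q ^ (l - 1) / (1 - Q ^ (l - 1)) / (1 - x * Q ^ l))"
proof -
  let ?c = "beta_coeff Q a n"
  have "1 - x * Q \<noteq> 0"
    using one_minus_mult_power_nonzero[OF assms(2), of 1] by simp
  have "beta_fun Q a n (Q * x) / (1 - x * Q)
      = (\<Sum>j=1..n. ?c j / (1 - Q ^ j) / (1 - x * Q) - ?c j * Q ^ j / (1 - Q ^ j) / (1 - x * Q ^ Suc j))"
    unfolding beta_fun_mult_eq_sum_coeff[OF assms(1)] sum_divide_distrib
  proof (intro sum.cong refl)
    fix j assume "j \<in> {1..n}"
    then have "1 - x * Q ^ Suc j \<noteq> 0" "1 - Q ^ j \<noteq> 0"
      using one_minus_mult_power_nonzero[OF assms(2), of "Suc j"] one_minus_mult_power_nonzero[of 1 j]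
      by auto
    with \<open>1 - x * Q \<noteq> 0\<close> show "?c j / (1 - x * Q ^ Suc j) / (1 - x * Q)
        = ?c j / (1 - Q ^ j) / (1 - x * Q) - ?c j * Q ^ j / (1 - Q ^ j) / (1 - x * Q ^ Suc j)"
      by (simp add: divide_simps) (simp add: algebra_simps)
  qed
  also have "\<dots> = beta_fun Q a n 1 / (1 - x * Q)
      - (\<Sum>j=1..n. ?c j * Q ^ j / (1 - Q ^ j) / (1 - x * Q ^ Suc j))"
    by (simp add: beta_fun_eq_sum_coeff[OF assms(1) order_refl, where x = 1] sum_subtractf sum_divide_distrib)
  also have "(\<Sum>j=1..n. ?c j * Q ^ j / (1 - Q ^ j) / (1 - x * Q ^ Suc j))
      = (\<Sum>l=1..Suc n. ?c (l - 1) * Q ^ (l - 1) / (1 - Q ^ (l - 1)) / (1 - x * Q ^ l))"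
    unfolding sum_atLeast1_atMost_Suc_shift by simp
  finally show ?thesis .
qed

lemma recursion_defect_partial_fractions:
  assumes "1 \<le> n" "x = 0 \<or> 1 \<le> x"
  shows "recursion_defect Q a n x = - (Q + 1 - a) * beta_fun Q a n 1 / (1 - x * Q)
           + (\<Sum>l=1..Suc n. recursion_summand Q a n l / (1 - x * Q ^ l))"
proof -
  let ?c = "beta_coeff Q a" and ?d = "\<lambda>l. 1 - x * Q ^ l" and ?\<nu> = "Q + 1 - a"
  define B where "B l = ?c n (l - 1) * Q ^ (l - 1) / (1 - Q ^ (l - 1)) / ?d l" for l
  have shifted: "beta_fun Q a n (Q * x) = (\<Sum>l=1..Suc n. ?c n (l - 1) / ?d l)"
    using assms(1) by (intro beta_fun_mult_eq_sum_coeff_shift) auto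
  have "?\<nu> / (1 - x * Q) * beta_fun Q a n (Q * x) = ?\<nu> * (beta_fun Q a n (Q * x) / (1 - x * Q))"
    by simp
  also have "\<dots> = ?\<nu> * (beta_fun Q a n 1 / (1 - x * Q) - (\<Sum>l=1..Suc n. B l))"
    unfolding beta_fun_mult_div_partial_fractions[OF assms] B_def ..
  finally have shifted_div: "?\<nu> / (1 - x * Q) * beta_fun Q a n (Q * x)
      = ?\<nu> * (beta_fun Q a n 1 / (1 - x * Q)) - ?\<nu> * (\<Sum>l=1..Suc n. B l)"
    by (simp only: right_diff_distrib)
  have next_fun: "beta_fun Q a (n + 1) x = (\<Sum>l=1..Suc n. ?c (n + 1) l / ?d l)"
    by (intro beta_fun_eq_sum_coeff) auto
  have this_fun: "beta_fun Q a n x = (\<Sum>l=1..Suc n. ?c n l / ?d l)"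
    using assms(1) by (intro beta_fun_eq_sum_coeff) auto
  have summand: "recursion_summand Q a n l / ?d l
      = ?c n (l - 1) / ?d l + ?\<nu> * B l - (1 - Q ^ (n + 1)) * (?c (n + 1) l / ?d l)
        - Q ^ n * (?c n l / ?d l) + (?c n l - ?c n (l - 1)) * Q ^ l / ?d l" for l
    by (simp add: recursion_summand_def B_def add_divide_distrib diff_divide_distrib algebra_simps)
  have summands: "(\<Sum>l=1..Suc n. recursion_summand Q a n l / ?d l)
      = beta_fun Q a n (Q * x) + ?\<nu> * (\<Sum>l=1..Suc n. B l) - (1 - Q ^ (n + 1)) * beta_fun Q a (n + 1) x
        - Q ^ n * beta_fun Q a n x + beta_fun_qdiff Q a n x"
    unfolding summand shifted next_fun this_fun beta_fun_qdiff_eq_sum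
    by (simp only: sum.distrib sum_subtractf sum_distrib_left)
  have "- ?\<nu> * beta_fun Q a n 1 / (1 - x * Q) = - (?\<nu> * (beta_fun Q a n 1 / (1 - x * Q)))"
    by (metis minus_divide_left mult_minus_left times_divide_eq_right)
  then show ?thesis
    unfolding recursion_defect_def shifted_div summands by (simp add: algebra_simps del: sum.cl_ivl_Suc)
qed

lemma recursion_defect_eq_sum_shift_defect:
  assumes "1 \<le> n" "x = 0 \<or> 1 \<le> x"
  shows "recursion_defect Q a n x
           = (\<Sum>l=1..Suc n. v_star Q a l * shift_defect Q a (n + 1 - l) (Q ^ (l - 1)) / (1 - x * Q ^ l))"
proof -
  let ?\<nu> = "Q + 1 - a"
  have "recursion_defect Q a n x = (recursion_summand Q a n 1 - ?\<nu> * beta_fun Q a n 1) / (1 - x * Q)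
      + (\<Sum>j=1..n. recursion_summand Q a n (Suc j) / (1 - x * Q ^ Suc j))"
    unfolding recursion_defect_partial_fractions[OF assms] sum_atLeast1_atMost_Suc_shift
    by (simp add: diff_divide_distrib) (simp add: minus_divide_left algebra_simps)
  also have "\<dots> = v_star Q a 1 * shift_defect Q a n 1 / (1 - x * Q)
      + (\<Sum>j=1..n. v_star Q a (Suc j) * shift_defect Q a (n - j) (Q ^ j) / (1 - x * Q ^ Suc j))"
    unfolding recursion_summand_1[OF assms(1)] by (simp add: recursion_summand_Suc)
  also have "\<dots> = (\<Sum>l=1..Suc n. v_star Q a l * shift_defect Q a (n + 1 - l) (Q ^ (l - 1)) / (1 - x * Q ^ l))"
    unfolding sum_atLeast1_atMost_Suc_shift by simp
  finally show ?thesis .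
qed

section \<open>The simultaneous induction and the recurrence\<close>

lemma recursion_defect_eq_0_if_shift_defect_eq_0:
  assumes "x = 0 \<or> 1 \<le> x" and shift: "\<And>k y. k \<le> n \<Longrightarrow> 1 \<le> y \<Longrightarrow> shift_defect Q a k y = 0"
  shows "recursion_defect Q a n x = 0"
proof (cases "n = 0")
  case True
  then show ?thesis
    using recursion_defect_0[OF assms(1)] by simp
next
  case False
  have "shift_defect Q a (n + 1 - l) (Q ^ (l - 1)) = 0" if "l \<in> {1..Suc n}" for l
    using that Q_gt_1 by (intro shift) (auto simp: one_le_power)
  then show ?thesis
    using False assms(1) by (simp add: recursion_defect_eq_sum_shift_defect)
qed

lemma shift_defect_eq_0:
  assumes "1 \<le> x"
  shows "shift_defect Q a m x = 0"
  using assms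
proof (induction m arbitrary: x rule: less_induct)
  case (less m)
  show ?case
  proof (cases "m = 0")
    case True
    then show ?thesis
      by (simp add: shift_defect_def)
  next
    case False
    have "coeff_defect Q a m l = 0" for l
    proof (cases "2 \<le> l \<and> l \<le> m")
      case True
      then have "recursion_defect Q a (m - l) (Q ^ (l - 1)) = 0"
        using Q_gt_1 by (intro recursion_defect_eq_0_if_shift_defect_eq_0 less.IH) (auto simp: one_le_power)
      then show ?thesis
        using True by (simp add: coeff_defect_eq_recursion_defect)
    qed (auto intro: coeff_defect_eq_0_outside)
    then show ?thesis
      using False less.prems by (simp add: shift_defect_eq_sum_coeff_defect)
  qed
qed

lemma recursion_defect_eq_0:
  assumes "x = 0 \<or> 1 \<le> x"
  shows "recursion_defect Q a n x = 0"
  using assms shift_defect_eq_0 by (rule recursion_defect_eq_0_if_shift_defect_eq_0)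

lemma coeff_defect_eq_0: "coeff_defect Q a m l = 0"
proof (cases "2 \<le> l \<and> l \<le> m")
  case True
  then show ?thesis
    using Q_gt_1 by (simp add: coeff_defect_eq_recursion_defect recursion_defect_eq_0 one_le_power)
qed (auto intro: coeff_defect_eq_0_outside)

lemma sum_beta_coeff_mult_power:
  assumes "1 \<le> n"
  shows "(1 - Q) * (\<Sum>l=1..n. beta_coeff Q a n l * Q ^ l)
           = Q * (1 - Q ^ n) * beta_fun Q a n 0 + Q * (Q ^ (n - 1) - 1) * beta_fun Q a (n - 1) 0"
proof -
  let ?c = "beta_coeff Q a"
  define M where "M = (\<Sum>l=1..n. ?c n l * Q ^ l)"
  have beta_n: "beta_fun Q a n 0 = (\<Sum>l=1..n. ?c n l)"
    using beta_fun_eq_sum_coeff[OF assms order_refl, where x = 0] by simp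
  have first: "(\<Sum>l=1..Suc n. ?c n l * (Q ^ l - Q)) = M - Q * beta_fun Q a n 0"
    by (simp add: M_def beta_n beta_coeff_eq_0 left_diff_distrib sum_subtractf sum_distrib_left mult.commute)
  have second: "(\<Sum>l=1..Suc n. ?c n (l - 1) * (Q ^ l - Q ^ (n + 1))) = Q * M - Q ^ (n + 1) * beta_fun Q a n 0"
    unfolding sum_atLeast1_atMost_Suc_shift
    by (simp add: M_def beta_n right_diff_distrib sum_subtractf sum_distrib_left algebra_simps)
  have third: "(\<Sum>l=1..Suc n. ?c (n - 1) (l - 1) * Q * (Q ^ (n - 1) - 1))
      = Q * (Q ^ (n - 1) - 1) * beta_fun Q a (n - 1) 0"
  proof (cases "n = 1")
    case False
    then have "beta_fun Q a (n - 1) 0 = (\<Sum>j=1..n. ?c (n - 1) j)"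
      using assms beta_fun_eq_sum_coeff[of "n - 1" n Q a 0] by simp
    then show ?thesis
      unfolding sum_atLeast1_atMost_Suc_shift by (simp add: sum_distrib_left sum_distrib_right algebra_simps)
  qed simp
  have "0 = (\<Sum>l=1..Suc n. coeff_defect Q a n l)"
    by (simp add: coeff_defect_eq_0)
  also have "\<dots> = (M - Q * beta_fun Q a n 0) - (Q * M - Q ^ (n + 1) * beta_fun Q a n 0)
      - Q * (Q ^ (n - 1) - 1) * beta_fun Q a (n - 1) 0"
    unfolding coeff_defect_def first[symmetric] second[symmetric] third[symmetric]
    by (simp only: sum_subtractf)
  finally show ?thesis
    unfolding M_def[symmetric] by (simp add: algebra_simps)
qed

lemma beta_fun_recurrence:
  assumes "1 \<le> n"
  shows "(Q ^ (n + 1) - 1) * beta_fun Q a (n + 1) 0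
           = (Q ^ (n + 1) + Q ^ n - a) * beta_fun Q a n 0 - (Q ^ n - Q) * beta_fun Q a (n - 1) 0"
proof -
  have "beta_fun_qdiff Q a n 0 = (1 - Q) * (\<Sum>l=1..n. beta_coeff Q a n l * Q ^ l)"
    by (simp add: beta_fun_qdiff_def sum_distrib_left algebra_simps)
  moreover have "Q * Q ^ (n - 1) = Q ^ n"
    using assms by (simp flip: power_Suc)
  ultimately have "beta_fun_qdiff Q a n 0 = Q * (1 - Q ^ n) * beta_fun Q a n 0 + (Q ^ n - Q) * beta_fun Q a (n - 1) 0"
    using sum_beta_coeff_mult_power[OF assms] by (simp add: algebra_simps)
  then show ?thesis
    using recursion_defect_eq_0[of 0 n] by (simp add: recursion_defect_def algebra_simps)
qed

lemma beta_star_recurrence: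
  assumes "1 \<le> n"
  shows "(Q ^ n - 1) * beta_star Q a (int n)
           = (Q ^ n + Q ^ (n - 1) - a) * beta_star Q a (int n - 1) - (Q ^ (n - 1) - Q) * beta_star Q a (int n - 2)"
proof (cases "n = 1")
  case True
  have "beta_star Q a 1 = (Q + 1 - a) / (Q - 1)"
    using beta_star_eq_beta_fun[of Q a 1] by (simp add: beta_fun_nonzero v_star_def zeta_star_def)
  moreover have "Q - 1 \<noteq> 0"
    using Q_gt_1 by simp
  ultimately show ?thesis
    using True by simp
next
  case False
  then obtain k where n: "n = k + 1" "1 \<le> k"
    using assms by (intro that[of "n - 1"]) auto
  then have indices: "int n - 1 = int k" "int n - 2 = int (k - 1)" "n - 1 = k"
    by auto
  show ?thesis
    unfolding indices beta_star_eq_beta_fun unfolding n(1) by (rule beta_fun_recurrence[OF n(2)])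
qed

end

lemma recurrence_unique:
  fixes f g :: "int \<Rightarrow> real" and c A B :: "nat \<Rightarrow> real"
  assumes "\<And>n. 1 \<le> n \<Longrightarrow> c n \<noteq> 0"
    and "\<And>n. 1 \<le> n \<Longrightarrow> c n * f (int n) = A n * f (int n - 1) - B n * f (int n - 2)"
    and "\<And>n. 1 \<le> n \<Longrightarrow> c n * g (int n) = A n * g (int n - 1) - B n * g (int n - 2)"
    and "f 0 = g 0" "f (-1) = g (-1)" "-1 \<le> n"
  shows "f n = g n"
proof -
  have "f (int k) = g (int k) \<and> f (int k - 1) = g (int k - 1)" for k
  proof (induction k)
    case (Suc k)
    have "c (Suc k) * f (int (Suc k)) = A (Suc k) * g (int k) - B (Suc k) * g (int k - 1)"
      using assms(2)[of "Suc k"] Suc.IH by simp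
    moreover have "c (Suc k) * g (int (Suc k)) = A (Suc k) * g (int k) - B (Suc k) * g (int k - 1)"
      using assms(3)[of "Suc k"] by simp
    ultimately have "c (Suc k) * f (int (Suc k)) = c (Suc k) * g (int (Suc k))"
      by simp
    then have "f (int (Suc k)) = g (int (Suc k))"
      using assms(1)[of "Suc k"] by simp
    then show ?case
      using Suc.IH by simp
  qed (simp add: assms(4,5))
  moreover have "n = -1 \<or> n = int (nat n)"
    using assms(6) by auto
  ultimately show ?thesis
    using assms(5) by metis
qed

lemma one_less_prime_power_power:
  assumes "prime_power q" "\<forall>n\<in>set ns. 0 < n"
  shows "1 < real q ^ prod_list ns"
proof -
  obtain p k where "prime p" "0 < k" "q = p ^ k"
    using assms(1) unfolding prime_power_def by blast
  then have "1 < q"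
    using prime_gt_1_nat one_less_power by blast
  moreover have "0 < prod_list ns"
    using assms(2) by (induction ns) auto
  ultimately show ?thesis
    by (simp add: one_less_power)
qed

theorem theorem4p4:
  fixes q :: nat and ns :: "nat list" and a Q :: real
  assumes "prime_power q"
    and "\<forall>n\<in>set ns. 0 < n"
    and "Q = real q ^ prod_list ns"
  shows "(\<forall>n::nat. 1 \<le> n \<longrightarrow>
           (Q ^ n - 1) * beta_star Q a (int n) =
             (Q ^ n + Q ^ (n - 1) - a) * beta_star Q a (int n - 1)
             - (Q ^ (n - 1) - Q) * beta_star Q a (int n - 2))
      \<and> beta_star Q a 0 = 1 \<and> beta_star Q a (-1) = 0
      \<and> (\<forall>f :: int \<Rightarrow> real. f 0 = 1 \<and> f (-1) = 0 \<and>
           (\<forall>n::nat. 1 \<le> n \<longrightarrow>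
              (Q ^ n - 1) * f (int n) =
                (Q ^ n + Q ^ (n - 1) - a) * f (int n - 1) - (Q ^ (n - 1) - Q) * f (int n - 2))
           \<longrightarrow> (\<forall>n\<ge>-1. f n = beta_star Q a n))"
proof -
  have "1 < Q"
    using assms by (simp add: one_less_prime_power_power)
  note recurrence = beta_star_recurrence[OF \<open>1 < Q\<close>]
  have "f n = beta_star Q a n"
    if "f 0 = 1" "f (-1) = 0" "-1 \<le> n"
      and "\<forall>n::nat. 1 \<le> n \<longrightarrow> (Q ^ n - 1) * f (int n) =
             (Q ^ n + Q ^ (n - 1) - a) * f (int n - 1) - (Q ^ (n - 1) - Q) * f (int n - 2)"
    for f n
  proof (rule recurrence_unique[where c = "\<lambda>n. Q ^ n - 1"])
    show "Q ^ n - 1 \<noteq> 0" if "1 \<le> n" for n :: nat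
      using one_less_power[OF \<open>1 < Q\<close>, of n] that by simp
  qed (use that recurrence in auto)
  then show ?thesis
    using recurrence by auto
qed

end
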